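(* Let $n,m\ge 1$, let $G\in\mathbb{R}^{2n\times 2n}$ be symmetric, let $C\in\mathbb{R}^{2m\times 2n}$, and set $A=\Sigma_n(G+C^\top\Sigma_m C/2)$. Define the controllability matrix $\mathcal{C}=(\Sigma_n C^\top\Sigma_m,\ A\Sigma_n C^\top\Sigma_m,\ \ldots,\ A^{2n-1}\Sigma_n C^\top\Sigma_m)$ and the observability matrix $\mathcal{O}=(C^\top,\ A^\top C^\top,\ \ldots,\ (A^\top)^{2n-1}C^\top)^\top$. Then for every vector $v\in\mathbb{R}^{2n}$, $$\Sigma_n v\in \mathrm{Ker}(\mathcal{O}) \iff v\in\mathrm{Ker}(\mathcal{C}^\top).$$
   Context: For $k\ge1$, $\Sigma_k$ denotes the $2k\times 2k$ block-diagonal matrix $\mathrm{diag}\{\Sigma,\ldots,\Sigma\}$ with $\Sigma=\begin{pmatrix}0&1\\-1&0\end{pmatrix}$. These matrices describe a linear quantum system $d\hat x=A\hat x\,dt+\Sigma_nC^\top\Sigma_m\,d\hat{\mathcal W}$, $d\hat{\mathcal W}^{\rm out}=C\hat x\,dt+d\hat{\mathcal W}$, where $\hat x$ is the vector of $n$ canonical position/momentum pairs, $\hat{\mathcal W}$ the input noise quadratures and $\hat{\mathcal W}^{\rm out}$ the output quadratures. *)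

theory Defs
  imports "Jordan_Normal_Form.Matrix_Kernel"
begin

text \<open>Sigma_k = diag(Sigma,...,Sigma), Sigma = [[0,1],[-1,0]], a 2k x 2k matrix (indices from 0).\<close>
definition Sigma_mat :: "nat \<Rightarrow> real mat" where
  "Sigma_mat k = mat (2*k) (2*k) (\<lambda>(i,j).
      if even i \<and> j = i + 1 then 1
      else if odd i \<and> j + 1 = i then -1 else 0)"

definition sys_A :: "nat \<Rightarrow> nat \<Rightarrow> real mat \<Rightarrow> real mat \<Rightarrow> real mat" where
  "sys_A n m G C = Sigma_mat n * (G + (1/2) \<cdot>\<^sub>m (transpose_mat C * Sigma_mat m * C))"

definition sys_B :: "nat \<Rightarrow> nat \<Rightarrow> real mat \<Rightarrow> real mat" where
  "sys_B n m C = Sigma_mat n * transpose_mat C * Sigma_mat m"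

text \<open>Controllability matrix (B, A B, ..., A^(2n-1) B), of size 2n x (2n * 2m):
  column j lies in block j div (2m), column j mod (2m) of that block.\<close>
definition ctrb_mat :: "nat \<Rightarrow> nat \<Rightarrow> real mat \<Rightarrow> real mat \<Rightarrow> real mat" where
  "ctrb_mat n m G C = mat (2*n) (2*n*(2*m)) (\<lambda>(i,j).
      ((sys_A n m G C ^\<^sub>m (j div (2*m))) * sys_B n m C) $$ (i, j mod (2*m)))"

text \<open>Observability matrix (C^T, A^T C^T, ..., (A^T)^(2n-1) C^T)^T, of size (2n * 2m) x 2n;
  its k-th row block is ((A^T)^k C^T)^T = C A^k.\<close>
definition obsv_mat :: "nat \<Rightarrow> nat \<Rightarrow> real mat \<Rightarrow> real mat \<Rightarrow> real mat" where
  "obsv_mat n m G C = mat (2*n*(2*m)) (2*n) (\<lambda>(i,j).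
      transpose_mat ((transpose_mat (sys_A n m G C)) ^\<^sub>m (i div (2*m)) * transpose_mat C)
        $$ (i mod (2*m), j))"

end

theory Submission
  imports Defs
begin

text \<open>Write \<open>A = S (G + K/2)\<close> with \<open>S = Sigma_mat n\<close>, \<open>K = C\<^sup>T S' C\<close> skew-symmetric, and
  \<open>B = S C\<^sup>T S'\<close>, so that \<open>B C = S K\<close>. As \<open>G\<close> is symmetric, \<open>S A\<^sup>T = (B C - A) S\<close>, hence
  \<open>S (A\<^sup>T)\<^sup>k = (B C - A)\<^sup>k S\<close> and the \<open>k\<close>-th block row of the transposed controllability matrix is
  \<open>B\<^sup>T (A\<^sup>T)\<^sup>k = S' C (B C - A)\<^sup>k S\<close>. Thus \<open>v\<close> lies in its kernel iff \<open>C (B C - A)\<^sup>k S v = 0\<close>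
  for \<open>k < 2n\<close>, whereas \<open>S v\<close> lies in the kernel of the observability matrix iff \<open>C A\<^sup>k S v = 0\<close>
  for \<open>k < 2n\<close>. On \<open>Ker C\<close> the matrix \<open>B C - A\<close> acts as \<open>-A\<close>, and an output feedback of this
  kind does not change the unobservable vectors: while the outputs vanish, the two trajectories agree
  up to the factor \<open>(-1)\<^sup>k\<close>.\<close>

lemma transpose_smult_mat: "transpose_mat (c \<cdot>\<^sub>m A) = c \<cdot>\<^sub>m transpose_mat A"
  by (rule eq_matI) auto

lemma smult_zero_vec [simp]: "k \<cdot>\<^sub>v 0\<^sub>v n = (0\<^sub>v n :: 'a::mult_zero vec)"
  by (rule eq_vecI) auto

lemma mult_mat_zero_vec:
  "A \<in> carrier_mat nr nc \<Longrightarrow> A *\<^sub>v 0\<^sub>v nc = (0\<^sub>v nr :: 'a::semiring_0 vec)"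
  by (rule eq_vecI) auto

lemma pow_mat_intertwine:
  fixes S X Y :: "'a::semiring_1 mat"
  assumes S: "S \<in> carrier_mat m n" and X: "X \<in> carrier_mat n n" and Y: "Y \<in> carrier_mat m m"
    and SX: "S * X = Y * S"
  shows "S * X ^\<^sub>m k = Y ^\<^sub>m k * S"
proof (induction k)
  case 0
  show ?case using S X Y by simp
next
  case (Suc k)
  have "S * X ^\<^sub>m Suc k = (S * X ^\<^sub>m k) * X"
    using S X by (simp add: assoc_mult_mat[of S m n _ n X n, symmetric])
  also have "\<dots> = Y ^\<^sub>m k * (S * X)"
    unfolding Suc by (rule assoc_mult_mat[OF pow_carrier_mat[OF Y] S X])
  also have "\<dots> = Y ^\<^sub>m Suc k * S"
    unfolding SX using assoc_mult_mat[OF pow_carrier_mat[OF Y] Y S] by simp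
  finally show ?case .
qed

lemma transpose_pow_mat:
  fixes A :: "'a::comm_semiring_1 mat"
  assumes A: "A \<in> carrier_mat n n"
  shows "transpose_mat (A ^\<^sub>m k) = transpose_mat A ^\<^sub>m k"
proof (induction k)
  case 0
  show ?case using A by simp
next
  case (Suc k)
  have AT: "transpose_mat A \<in> carrier_mat n n" using A by simp
  have "transpose_mat (A ^\<^sub>m Suc k) = transpose_mat A * transpose_mat A ^\<^sub>m k"
    using A by (simp add: transpose_mult[of _ n n A n] Suc)
  also have "\<dots> = transpose_mat A ^\<^sub>m Suc k"
    using pow_mat_intertwine[OF AT AT AT refl] AT by simp
  finally show ?case .
qed

lemma feedback_pow_mat_mult_vec:
  fixes A E C :: "'a::field mat"
  assumes A: "A \<in> carrier_mat n n" and E: "E \<in> carrier_mat n n" and C: "C \<in> carrier_mat m n"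
    and agree: "\<And>u. u \<in> carrier_vec n \<Longrightarrow> C *\<^sub>v u = 0\<^sub>v m \<Longrightarrow> E *\<^sub>v u = c \<cdot>\<^sub>v (A *\<^sub>v u)"
    and w: "w \<in> carrier_vec n" and unobs: "\<forall>j<k. C *\<^sub>v (A ^\<^sub>m j *\<^sub>v w) = 0\<^sub>v m"
  shows "E ^\<^sub>m k *\<^sub>v w = c ^ k \<cdot>\<^sub>v (A ^\<^sub>m k *\<^sub>v w)"
  using w unobs
proof (induction k arbitrary: w)
  case 0
  then show ?case using A E by simp
next
  case (Suc k)
  have Aw: "A *\<^sub>v w \<in> carrier_vec n" using A Suc.prems(1) by simp
  have shift: "A ^\<^sub>m j *\<^sub>v (A *\<^sub>v w) = A ^\<^sub>m Suc j *\<^sub>v w" for j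
    using assoc_mult_mat_vec[OF pow_carrier_mat[OF A] A Suc.prems(1)] by simp
  have "E ^\<^sub>m Suc k *\<^sub>v w = E ^\<^sub>m k *\<^sub>v (E *\<^sub>v w)"
    using assoc_mult_mat_vec[OF pow_carrier_mat[OF E] E Suc.prems(1)] by simp
  also have "E *\<^sub>v w = c \<cdot>\<^sub>v (A *\<^sub>v w)"
    using agree[OF Suc.prems(1)] Suc.prems(2)[rule_format, of 0] A Suc.prems(1) by simp
  also have "E ^\<^sub>m k *\<^sub>v (A *\<^sub>v w) = c ^ k \<cdot>\<^sub>v (A ^\<^sub>m Suc k *\<^sub>v w)"
  proof -
    have "\<forall>j<k. C *\<^sub>v (A ^\<^sub>m j *\<^sub>v (A *\<^sub>v w)) = 0\<^sub>v m"
      unfolding shift using Suc.prems(2) Suc_mono by blast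
    then show ?thesis unfolding shift[symmetric] by (rule Suc.IH[OF Aw])
  qed
  then have "E ^\<^sub>m k *\<^sub>v (c \<cdot>\<^sub>v (A *\<^sub>v w)) = c \<cdot>\<^sub>v (c ^ k \<cdot>\<^sub>v (A ^\<^sub>m Suc k *\<^sub>v w))"
    using mult_mat_vec[OF pow_carrier_mat[OF E] Aw] by simp
  finally show ?case by (simp add: smult_smult_assoc)
qed

lemma unobservable_iff_feedback:
  fixes A E C :: "'a::field mat"
  assumes A: "A \<in> carrier_mat n n" and E: "E \<in> carrier_mat n n" and C: "C \<in> carrier_mat m n"
    and c: "c \<noteq> 0"
    and agree: "\<And>u. u \<in> carrier_vec n \<Longrightarrow> C *\<^sub>v u = 0\<^sub>v m \<Longrightarrow> E *\<^sub>v u = c \<cdot>\<^sub>v (A *\<^sub>v u)"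
    and w: "w \<in> carrier_vec n"
  shows "(\<forall>k<N. C *\<^sub>v (A ^\<^sub>m k *\<^sub>v w) = 0\<^sub>v m) \<longleftrightarrow> (\<forall>k<N. C *\<^sub>v (E ^\<^sub>m k *\<^sub>v w) = 0\<^sub>v m)"
proof -
  have agree': "A *\<^sub>v u = inverse c \<cdot>\<^sub>v (E *\<^sub>v u)"
    if "u \<in> carrier_vec n" "C *\<^sub>v u = 0\<^sub>v m" for u
    using agree[OF that] c by (simp add: smult_smult_assoc)
  have transfer: "\<forall>k<N. C *\<^sub>v (Y ^\<^sub>m k *\<^sub>v w) = 0\<^sub>v m"
    if X: "X \<in> carrier_mat n n" and Y: "Y \<in> carrier_mat n n"
      and XY: "\<And>u. u \<in> carrier_vec n \<Longrightarrow> C *\<^sub>v u = 0\<^sub>v m \<Longrightarrow> Y *\<^sub>v u = d \<cdot>\<^sub>v (X *\<^sub>v u)"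
      and unobs: "\<forall>k<N. C *\<^sub>v (X ^\<^sub>m k *\<^sub>v w) = 0\<^sub>v m" for X Y and d :: 'a
  proof (intro allI impI)
    fix k assume "k < N"
    then have "Y ^\<^sub>m k *\<^sub>v w = d ^ k \<cdot>\<^sub>v (X ^\<^sub>m k *\<^sub>v w)"
      using unobs by (intro feedback_pow_mat_mult_vec[OF X Y C XY w]) auto
    then show "C *\<^sub>v (Y ^\<^sub>m k *\<^sub>v w) = 0\<^sub>v m"
      using unobs \<open>k < N\<close> mult_mat_vec[OF C mult_mat_vec_carrier[OF pow_carrier_mat[OF X] w]]
      by simp
  qed
  show ?thesis
    using transfer[OF A E agree] transfer[OF E A agree'] by blast
qed

lemma mat_kernel_stacked_blocks:
  fixes F :: "nat \<Rightarrow> 'a::comm_ring_1 mat"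
  assumes F: "\<And>k. k < N \<Longrightarrow> F k \<in> carrier_mat M K"
  shows "w \<in> mat_kernel (mat (N * M) K (\<lambda>(i, j). F (i div M) $$ (i mod M, j)))
     \<longleftrightarrow> w \<in> carrier_vec K \<and> (\<forall>k<N. F k *\<^sub>v w = 0\<^sub>v M)"
proof -
  let ?X = "mat (N * M) K (\<lambda>(i, j). F (i div M) $$ (i mod M, j))"
  have block: "i div M < N" "i mod M < M" if "i < N * M" for i
  proof -
    have "M > 0" using that by (cases M) auto
    then show "i div M < N" "i mod M < M" using that by (auto simp: less_mult_imp_div_less)
  qed
  have entry: "(?X *\<^sub>v w) $ i = (F (i div M) *\<^sub>v w) $ (i mod M)"
    if "i < N * M" "w \<in> carrier_vec K" for i w
    using that block[OF that(1)] F[OF block(1)[OF that(1)]] by (simp add: scalar_prod_def row_def)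
  have "?X *\<^sub>v w = 0\<^sub>v (N * M) \<longleftrightarrow> (\<forall>k<N. F k *\<^sub>v w = 0\<^sub>v M)"
    if w: "w \<in> carrier_vec K" for w
  proof
    assume X: "?X *\<^sub>v w = 0\<^sub>v (N * M)"
    show "\<forall>k<N. F k *\<^sub>v w = 0\<^sub>v M"
    proof (intro allI impI eq_vecI)
      fix k r assume k: "k < N" and "r < dim_vec (0\<^sub>v M :: 'a vec)"
      then have r: "r < M" by simp
      have "k * M + r < Suc k * M" using r by simp
      also have "\<dots> \<le> N * M" using k by (intro mult_le_mono1) simp
      finally have i: "k * M + r < N * M" .
      show "(F k *\<^sub>v w) $ r = 0\<^sub>v M $ r"
        using entry[OF i w] X i r by simp
    qed (use F in auto)
  next
    assume "\<forall>k<N. F k *\<^sub>v w = 0\<^sub>v M"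
    then show "?X *\<^sub>v w = 0\<^sub>v (N * M)"
      using entry[OF _ w] block by (intro eq_vecI) auto
  qed
  then show ?thesis unfolding mat_kernel_def by auto
qed

lemma skew_mult_transpose_mult:
  fixes S H K :: "'a::comm_ring_1 mat"
  assumes S: "S \<in> carrier_mat n n" and S_skew: "transpose_mat S = - S"
    and H: "H \<in> carrier_mat n n" and K: "K \<in> carrier_mat n n"
    and H_transpose: "transpose_mat H = H - K"
  shows "S * transpose_mat (S * H) = (S * K - S * H) * S"
proof -
  have SHS: "S * (H * S) \<in> carrier_mat n n" and SKS: "S * (K * S) \<in> carrier_mat n n"
    using S H K by auto
  have "S * transpose_mat (S * H) = - (S * ((H - K) * S))"
    using S H K by (simp add: transpose_mult[OF S H] S_skew H_transpose)
  also have "\<dots> = - (S * (H * S) - S * (K * S))"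
    using S H K by (simp add: minus_mult_distrib_mat[of _ n n] mult_minus_distrib_mat[of S n n _ n])
  also have "\<dots> = S * (K * S) - S * (H * S)"
    using SHS SKS by (intro eq_matI) auto
  also have "\<dots> = (S * K - S * H) * S"
    using S H K by (simp add: minus_mult_distrib_mat[of _ n n])
  finally show ?thesis .
qed

lemma Sigma_mat_dim [simp]:
  "dim_row (Sigma_mat k) = 2 * k" "dim_col (Sigma_mat k) = 2 * k"
  unfolding Sigma_mat_def by simp_all

lemma Sigma_mat_carrier [simp]: "Sigma_mat k \<in> carrier_mat (2 * k) (2 * k)"
  by (simp add: carrier_matI)

lemma transpose_Sigma_mat: "transpose_mat (Sigma_mat k) = - Sigma_mat k"
  unfolding Sigma_mat_def by (rule eq_matI) (auto simp: uminus_mat_def; presburger)+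

lemma Sigma_mat_mult_vec_nth:
  assumes x: "x \<in> carrier_vec (2 * k)" and i: "i < 2 * k"
  shows "(Sigma_mat k *\<^sub>v x) $ i = (if even i then x $ (i + 1) else - x $ (i - 1))"
proof -
  define p where "p = (if even i then i + 1 else i - 1)"
  have p: "p < 2 * k" using i unfolding p_def by presburger
  have "(Sigma_mat k *\<^sub>v x) $ i = (\<Sum>j\<in>{0..<2 * k}. Sigma_mat k $$ (i, j) * x $ j)"
    using i x by (simp add: scalar_prod_def)
  also have "\<dots> = (\<Sum>j\<in>{0..<2 * k}. if j = p then (if even i then x $ j else - x $ j) else 0)"
    by (rule sum.cong) (use i in \<open>auto simp: Sigma_mat_def p_def\<close>)
  also have "\<dots> = (if even i then x $ (i + 1) else - x $ (i - 1))"
    using p by (simp add: p_def)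
  finally show ?thesis .
qed

lemma Sigma_mat_mult_Sigma_mat_vec:
  assumes x: "x \<in> carrier_vec (2 * k)"
  shows "Sigma_mat k *\<^sub>v (Sigma_mat k *\<^sub>v x) = - x"
proof (rule eq_vecI)
  fix i assume "i < dim_vec (- x)"
  then have i: "i < 2 * k" using x by simp
  have Sx: "Sigma_mat k *\<^sub>v x \<in> carrier_vec (2 * k)" by (rule mult_mat_vec_carrier[OF Sigma_mat_carrier x])
  show "(Sigma_mat k *\<^sub>v (Sigma_mat k *\<^sub>v x)) $ i = (- x) $ i"
  proof (cases "even i")
    case True
    then have "i + 1 < 2 * k" "odd (i + 1)" using i by presburger+
    then show ?thesis using True i x Sigma_mat_mult_vec_nth[OF Sx i] Sigma_mat_mult_vec_nth[OF x] by simp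
  next
    case False
    then have "i - 1 < 2 * k" "even (i - 1)" "i - 1 + 1 = i" using i by presburger+
    then show ?thesis using False i x Sigma_mat_mult_vec_nth[OF Sx i] Sigma_mat_mult_vec_nth[OF x] by simp
  qed
qed (use x in simp)

lemma Sigma_mat_mult_vec_eq_0_iff:
  assumes x: "x \<in> carrier_vec (2 * k)"
  shows "Sigma_mat k *\<^sub>v x = 0\<^sub>v (2 * k) \<longleftrightarrow> x = 0\<^sub>v (2 * k)"
proof
  assume "Sigma_mat k *\<^sub>v x = 0\<^sub>v (2 * k)"
  then have "- x = 0\<^sub>v (2 * k)"
    using Sigma_mat_mult_Sigma_mat_vec[OF x] mult_mat_zero_vec[OF Sigma_mat_carrier] by simp
  then show "x = 0\<^sub>v (2 * k)" using x by (metis uminus_zero_vec_eq)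
qed (simp add: mult_mat_zero_vec)

lemma sys_A_carrier:
  assumes "G \<in> carrier_mat (2 * n) (2 * n)" and "C \<in> carrier_mat (2 * m) (2 * n)"
  shows "sys_A n m G C \<in> carrier_mat (2 * n) (2 * n)"
  using assms unfolding sys_A_def by (meson Sigma_mat_carrier add_carrier_mat mult_carrier_mat
      smult_carrier_mat transpose_carrier_mat)

lemma sys_B_carrier:
  assumes "C \<in> carrier_mat (2 * m) (2 * n)"
  shows "sys_B n m C \<in> carrier_mat (2 * n) (2 * m)"
  using assms unfolding sys_B_def by (meson Sigma_mat_carrier mult_carrier_mat transpose_carrier_mat)

lemma transpose_sys_B:
  assumes C: "C \<in> carrier_mat (2 * m) (2 * n)"
  shows "transpose_mat (sys_B n m C) = Sigma_mat m * (C * Sigma_mat n)"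
proof -
  have CT: "transpose_mat C \<in> carrier_mat (2 * n) (2 * m)" using C by simp
  have SCT: "Sigma_mat n * transpose_mat C \<in> carrier_mat (2 * n) (2 * m)"
    using CT by (rule mult_carrier_mat[OF Sigma_mat_carrier])
  have "transpose_mat (sys_B n m C) = transpose_mat (Sigma_mat m) * (C * transpose_mat (Sigma_mat n))"
    unfolding sys_B_def transpose_mult[OF SCT Sigma_mat_carrier] transpose_mult[OF Sigma_mat_carrier CT]
    by simp
  then show ?thesis using C by (simp add: transpose_Sigma_mat)
qed

lemma Sigma_mat_mult_transpose_sys_A:
  assumes G: "G \<in> carrier_mat (2 * n) (2 * n)" and G_sym: "transpose_mat G = G"
    and C: "C \<in> carrier_mat (2 * m) (2 * n)"
  shows "Sigma_mat n * transpose_mat (sys_A n m G C)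
    = (sys_B n m C * C - sys_A n m G C) * Sigma_mat n"
proof -
  define K where "K = transpose_mat C * Sigma_mat m * C"
  define H where "H = G + (1/2) \<cdot>\<^sub>m K"
  have CT: "transpose_mat C \<in> carrier_mat (2 * n) (2 * m)" using C by simp
  have CTS: "transpose_mat C * Sigma_mat m \<in> carrier_mat (2 * n) (2 * m)"
    using CT by (rule mult_carrier_mat) simp
  have K: "K \<in> carrier_mat (2 * n) (2 * n)" unfolding K_def using CTS C by (rule mult_carrier_mat)
  have H: "H \<in> carrier_mat (2 * n) (2 * n)" unfolding H_def using G K by simp
  have K_skew: "transpose_mat K = - K"
    unfolding K_def transpose_mult[OF CTS C] transpose_mult[OF CT Sigma_mat_carrier]
    using C CT assoc_mult_mat[OF CT Sigma_mat_carrier C] by (simp add: transpose_Sigma_mat)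
  have H_transpose: "transpose_mat H = H - K"
    unfolding H_def using G K by (simp add: transpose_add transpose_smult_mat K_skew G_sym)
      (rule eq_matI, auto)
  have BC: "sys_B n m C * C = Sigma_mat n * K"
  proof -
    have SCT: "Sigma_mat n * transpose_mat C \<in> carrier_mat (2 * n) (2 * m)"
      using CT by (rule mult_carrier_mat[OF Sigma_mat_carrier])
    have SC: "Sigma_mat m * C \<in> carrier_mat (2 * m) (2 * n)"
      using C by (rule mult_carrier_mat[OF Sigma_mat_carrier])
    show ?thesis
      unfolding sys_B_def K_def assoc_mult_mat[OF SCT Sigma_mat_carrier C]
        assoc_mult_mat[OF Sigma_mat_carrier CT SC] assoc_mult_mat[OF CT Sigma_mat_carrier C] ..
  qed
  show ?thesis
    unfolding BC using skew_mult_transpose_mult[OF Sigma_mat_carrier transpose_Sigma_mat H K H_transpose]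
    by (simp add: sys_A_def H_def K_def)
qed

lemma obsv_mat_kernel_iff:
  assumes G: "G \<in> carrier_mat (2 * n) (2 * n)" and C: "C \<in> carrier_mat (2 * m) (2 * n)"
  shows "w \<in> mat_kernel (obsv_mat n m G C) \<longleftrightarrow>
    w \<in> carrier_vec (2 * n) \<and> (\<forall>k<2 * n. C *\<^sub>v (sys_A n m G C ^\<^sub>m k *\<^sub>v w) = 0\<^sub>v (2 * m))"
proof -
  let ?A = "sys_A n m G C"
  have A: "?A \<in> carrier_mat (2 * n) (2 * n)" using sys_A_carrier[OF G C] .
  have AT: "transpose_mat ?A \<in> carrier_mat (2 * n) (2 * n)" using A by simp
  have CT: "transpose_mat C \<in> carrier_mat (2 * n) (2 * m)" using C by simp
  have block: "transpose_mat (transpose_mat ?A ^\<^sub>m k * transpose_mat C) = C * ?A ^\<^sub>m k" for k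
    unfolding transpose_mult[OF pow_carrier_mat[OF AT] CT] transpose_pow_mat[OF AT] by simp
  have "obsv_mat n m G C = mat (2 * n * (2 * m)) (2 * n) (\<lambda>(i, j). (C * ?A ^\<^sub>m (i div (2 * m))) $$ (i mod (2 * m), j))"
    unfolding obsv_mat_def block ..
  moreover have "C * ?A ^\<^sub>m k \<in> carrier_mat (2 * m) (2 * n)" for k
    using C pow_carrier_mat[OF A] by (rule mult_carrier_mat)
  ultimately show ?thesis
    using mat_kernel_stacked_blocks[of "2 * n" "\<lambda>k. C * ?A ^\<^sub>m k" "2 * m" "2 * n" w]
      assoc_mult_mat_vec[OF C pow_carrier_mat[OF A]] by auto
qed

lemma ctrb_mat_transpose_kernel_iff:
  assumes G: "G \<in> carrier_mat (2 * n) (2 * n)" and G_sym: "transpose_mat G = G"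
    and C: "C \<in> carrier_mat (2 * m) (2 * n)"
  shows "v \<in> mat_kernel (transpose_mat (ctrb_mat n m G C)) \<longleftrightarrow>
    v \<in> carrier_vec (2 * n) \<and> (\<forall>k<2 * n.
      C *\<^sub>v ((sys_B n m C * C - sys_A n m G C) ^\<^sub>m k *\<^sub>v (Sigma_mat n *\<^sub>v v)) = 0\<^sub>v (2 * m))"
proof -
  let ?A = "sys_A n m G C" and ?B = "sys_B n m C" and ?S = "Sigma_mat n"
  let ?E = "?B * C - ?A"
  have A: "?A \<in> carrier_mat (2 * n) (2 * n)" using sys_A_carrier[OF G C] .
  have B: "?B \<in> carrier_mat (2 * n) (2 * m)" using sys_B_carrier[OF C] .
  have E: "?E \<in> carrier_mat (2 * n) (2 * n)" using A B C by (meson minus_carrier_mat mult_carrier_mat)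
  have AT: "transpose_mat ?A \<in> carrier_mat (2 * n) (2 * n)" using A by simp
  have CS: "C * ?S \<in> carrier_mat (2 * m) (2 * n)" using C by (rule mult_carrier_mat) simp
  define F where "F k = Sigma_mat m * (C * (?E ^\<^sub>m k * ?S))" for k
  have F: "F k \<in> carrier_mat (2 * m) (2 * n)" for k
    unfolding F_def using C pow_carrier_mat[OF E] by (meson Sigma_mat_carrier mult_carrier_mat)
  have block: "transpose_mat (?A ^\<^sub>m k * ?B) = F k" for k
  proof -
    have "transpose_mat (?A ^\<^sub>m k * ?B) = Sigma_mat m * (C * ?S) * transpose_mat ?A ^\<^sub>m k"
      unfolding transpose_mult[OF pow_carrier_mat[OF A] B] transpose_pow_mat[OF A] transpose_sys_B[OF C] ..
    also have "\<dots> = Sigma_mat m * (C * (?S * transpose_mat ?A ^\<^sub>m k))"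
      unfolding assoc_mult_mat[OF Sigma_mat_carrier CS pow_carrier_mat[OF AT]]
        assoc_mult_mat[OF C Sigma_mat_carrier pow_carrier_mat[OF AT]] ..
    also have "?S * transpose_mat ?A ^\<^sub>m k = ?E ^\<^sub>m k * ?S"
      by (rule pow_mat_intertwine[OF Sigma_mat_carrier AT E Sigma_mat_mult_transpose_sys_A[OF G G_sym C]])
    finally show ?thesis unfolding F_def .
  qed
  have "transpose_mat (ctrb_mat n m G C) = mat (2 * n * (2 * m)) (2 * n) (\<lambda>(i, j). F (i div (2 * m)) $$ (i mod (2 * m), j))"
  proof (rule eq_matI)
    fix i j assume "i < dim_row (mat (2 * n * (2 * m)) (2 * n) (\<lambda>(i, j). F (i div (2 * m)) $$ (i mod (2 * m), j)))"
      and "j < dim_col (mat (2 * n * (2 * m)) (2 * n) (\<lambda>(i, j). F (i div (2 * m)) $$ (i mod (2 * m), j)))"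
    then have i: "i < 2 * n * (2 * m)" and j: "j < 2 * n" by simp_all
    then have "i mod (2 * m) < 2 * m" by (cases m) auto
    then show "transpose_mat (ctrb_mat n m G C) $$ (i, j) = mat (2 * n * (2 * m)) (2 * n) (\<lambda>(i, j). F (i div (2 * m)) $$ (i mod (2 * m), j)) $$ (i, j)"
      using i j A B unfolding ctrb_mat_def block[symmetric] by simp
  qed (simp_all add: ctrb_mat_def)
  moreover have "F k *\<^sub>v v = 0\<^sub>v (2 * m) \<longleftrightarrow> C *\<^sub>v (?E ^\<^sub>m k *\<^sub>v (?S *\<^sub>v v)) = 0\<^sub>v (2 * m)"
    if v: "v \<in> carrier_vec (2 * n)" for k v
  proof -
    have Sv: "?S *\<^sub>v v \<in> carrier_vec (2 * n)" by (rule mult_mat_vec_carrier[OF Sigma_mat_carrier v])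
    have "F k *\<^sub>v v = Sigma_mat m *\<^sub>v (C *\<^sub>v (?E ^\<^sub>m k *\<^sub>v (?S *\<^sub>v v)))"
    proof -
      have EkS: "?E ^\<^sub>m k * ?S \<in> carrier_mat (2 * n) (2 * n)"
        using pow_carrier_mat[OF E] by (rule mult_carrier_mat) simp
      have CEkS: "C * (?E ^\<^sub>m k * ?S) \<in> carrier_mat (2 * m) (2 * n)"
        using C EkS by (rule mult_carrier_mat)
      show ?thesis
        unfolding F_def assoc_mult_mat_vec[OF Sigma_mat_carrier CEkS v] assoc_mult_mat_vec[OF C EkS v]
          assoc_mult_mat_vec[OF pow_carrier_mat[OF E] Sigma_mat_carrier v] ..
    qed
    moreover have "C *\<^sub>v (?E ^\<^sub>m k *\<^sub>v (?S *\<^sub>v v)) \<in> carrier_vec (2 * m)"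
      using C mult_mat_vec_carrier[OF pow_carrier_mat[OF E] Sv] by (rule mult_mat_vec_carrier)
    ultimately show ?thesis using Sigma_mat_mult_vec_eq_0_iff by simp
  qed
  ultimately show ?thesis using mat_kernel_stacked_blocks[of "2 * n" F "2 * m" "2 * n" v, OF F] by auto
qed

theorem lemma1:
  fixes n m :: nat and G C :: "real mat" and v :: "real vec"
  assumes "n \<ge> 1" and "m \<ge> 1"
    and "G \<in> carrier_mat (2*n) (2*n)" and "transpose_mat G = G"
    and "C \<in> carrier_mat (2*m) (2*n)"
    and "v \<in> carrier_vec (2*n)"
  shows "Sigma_mat n *\<^sub>v v \<in> mat_kernel (obsv_mat n m G C)
     \<longleftrightarrow> v \<in> mat_kernel (transpose_mat (ctrb_mat n m G C))"
proof -
  note G = assms(3) and G_sym = assms(4) and C = assms(5) and v = assms(6)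
  let ?A = "sys_A n m G C" and ?B = "sys_B n m C"
  have A: "?A \<in> carrier_mat (2 * n) (2 * n)" using sys_A_carrier[OF G C] .
  have B: "?B \<in> carrier_mat (2 * n) (2 * m)" using sys_B_carrier[OF C] .
  have E: "?B * C - ?A \<in> carrier_mat (2 * n) (2 * n)" using A B C by (meson minus_carrier_mat mult_carrier_mat)
  have feedback: "(?B * C - ?A) *\<^sub>v u = (-1) \<cdot>\<^sub>v (?A *\<^sub>v u)"
    if "u \<in> carrier_vec (2 * n)" "C *\<^sub>v u = 0\<^sub>v (2 * m)" for u
  proof -
    have BC: "?B * C \<in> carrier_mat (2 * n) (2 * n)" using B C by (rule mult_carrier_mat)
    have "(?B * C - ?A) *\<^sub>v u = ?B *\<^sub>v (C *\<^sub>v u) - ?A *\<^sub>v u"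
      unfolding minus_mult_distrib_mat_vec[OF BC A that(1)] assoc_mult_mat_vec[OF B C that(1)] ..
    also have "\<dots> = (-1) \<cdot>\<^sub>v (?A *\<^sub>v u)"
      unfolding that(2) mult_mat_zero_vec[OF B] using A by (intro eq_vecI) auto
    finally show ?thesis .
  qed
  have Sv: "Sigma_mat n *\<^sub>v v \<in> carrier_vec (2 * n)" by (rule mult_mat_vec_carrier[OF Sigma_mat_carrier v])
  have "(\<forall>k<2 * n. C *\<^sub>v (?A ^\<^sub>m k *\<^sub>v (Sigma_mat n *\<^sub>v v)) = 0\<^sub>v (2 * m)) \<longleftrightarrow>
      (\<forall>k<2 * n. C *\<^sub>v ((?B * C - ?A) ^\<^sub>m k *\<^sub>v (Sigma_mat n *\<^sub>v v)) = 0\<^sub>v (2 * m))"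
    by (rule unobservable_iff_feedback[OF A E C _ feedback Sv]) simp
  then show ?thesis
    unfolding obsv_mat_kernel_iff[OF G C] ctrb_mat_transpose_kernel_iff[OF G G_sym C]
    using v Sv by blast
qed

end
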